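(* Let $j\in\mathbb{N}$. There exist surfaces in $\mathbb{P}^3(\mathbb{C})$ of degree $d=2(j+1)$ with $4(j+1)^2$ singularities of type $A_j$.
   Context: A singularity of type $A_j$ of a surface is a point where it is locally analytically equivalent to $x^{j+1}+y^2+z^2=0$. *)

theory Defs
  imports "HOL-Analysis.Analysis"
begin

text \<open>Homogeneous polynomials of degree d in the homogeneous coordinates
  x1,...,x4 of P^3(C), given by their coefficient function on exponent
  tuples (a,b,e,g) with a+b+e+g = d (coefficients elsewhere are ignored).\<close>

definition hpoly_eval :: "nat \<Rightarrow> (nat \<Rightarrow> nat \<Rightarrow> nat \<Rightarrow> nat \<Rightarrow> complex) \<Rightarrow> complex^4 \<Rightarrow> complex" where
  "hpoly_eval d c x =
     (\<Sum>(a,b,e,g)\<in>{(a,b,e,g). a + b + e + g = d}.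
        c a b e g * (x$1)^a * (x$2)^b * (x$3)^e * (x$4)^g)"

definition hpoly_nonzero :: "nat \<Rightarrow> (nat \<Rightarrow> nat \<Rightarrow> nat \<Rightarrow> nat \<Rightarrow> complex) \<Rightarrow> bool" where
  "hpoly_nonzero d c \<longleftrightarrow> (\<exists>a b e g. a + b + e + g = d \<and> c a b e g \<noteq> 0)"

definition holo_map :: "(complex^'n \<Rightarrow> complex^'m) \<Rightarrow> (complex^'n) set \<Rightarrow> bool" where
  "holo_map f S \<longleftrightarrow> open S \<and>
     (\<forall>x\<in>S. \<exists>L. (f has_derivative L) (at x) \<and> (\<forall>v. L (\<i> *s v) = \<i> *s L v))"

definition holo_fun :: "(complex^'n \<Rightarrow> complex) \<Rightarrow> (complex^'n) set \<Rightarrow> bool" where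
  "holo_fun f S \<longleftrightarrow> open S \<and>
     (\<forall>x\<in>S. \<exists>L. (f has_derivative L) (at x) \<and> (\<forall>v. L (\<i> *s v) = \<i> * L v))"

definition Aj_form :: "nat \<Rightarrow> complex^3 \<Rightarrow> complex" where
  "Aj_form j y = (y$1)^(j+1) + (y$2)^2 + (y$3)^2"

text \<open>The function germ f at p is locally analytically (contact) equivalent to the
  A_j normal form at 0: there are a local biholomorphism phi (p |-> 0) and a
  nowhere vanishing holomorphic u with f = u * (Aj_form j o phi) near p.\<close>

definition Aj_germ :: "nat \<Rightarrow> (complex^3 \<Rightarrow> complex) \<Rightarrow> complex^3 \<Rightarrow> bool" where
  "Aj_germ j f p \<longleftrightarrow>
     (\<exists>U V \<phi> \<psi> u. p \<in> U \<and> 0 \<in> V \<and> holo_map \<phi> U \<and> holo_map \<psi> V \<and> \<phi> p = 0 \<and>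
        (\<forall>x\<in>U. \<phi> x \<in> V \<and> \<psi> (\<phi> x) = x) \<and> (\<forall>y\<in>V. \<psi> y \<in> U \<and> \<phi> (\<psi> y) = y) \<and>
        holo_fun u U \<and> (\<forall>x\<in>U. u x \<noteq> 0) \<and>
        (\<forall>x\<in>U. f x = u x * Aj_form j (\<phi> x)))"

text \<open>The surface {F = 0} in P^3(C) (F homogeneous of degree d with coefficients c)
  has a singularity of type A_j at the point [v]: in an affine chart
  x |-> [v + A x] of P^3 centred at [v] (A injective, v not in range A),
  the local equation F(v + A x) is equivalent to the A_j normal form at x = 0.\<close>

definition Aj_point :: "nat \<Rightarrow> nat \<Rightarrow> (nat \<Rightarrow> nat \<Rightarrow> nat \<Rightarrow> nat \<Rightarrow> complex) \<Rightarrow> complex^4 \<Rightarrow> bool" where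
  "Aj_point j d c v \<longleftrightarrow>
     (\<exists>A :: complex^3^4.
        (\<forall>x a. A *v x + a *s v = 0 \<longrightarrow> x = 0 \<and> a = 0) \<and>
        Aj_germ j (\<lambda>x. hpoly_eval d c (v + A *v x)) 0)"

end

theory Submission
  imports Defs
begin

text \<open>
  Let \<open>m = j + 1\<close> and \<open>G = \<Sum> X\<^sub>i\<^sup>2 - \<Sum>\<^sub>i\<^sub><\<^sub>k X\<^sub>i X\<^sub>k\<close>.
  The quadric \<open>G = 0\<close> is tangent to each coordinate plane, e.g. to \<open>X\<^sub>1 = 0\<close>
  at \<open>[0:1:1:1]\<close>. The surface \<open>F = G(x\<^sub>1\<^sup>m, \<dots>, x\<^sub>4\<^sup>m)\<close> of degree \<open>2m\<close> is its
  pull-back under the \<open>m\<close>-th power map, and each tangency point has \<open>m\<^sup>2\<close> preimages,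
  e.g. \<open>[0:y:z:1]\<close> with \<open>y\<^sup>m = z\<^sup>m = 1\<close>.

  Near such a point put \<open>X = x\<^sub>1\<^sup>m\<close>, \<open>a = (y + x\<^sub>2)\<^sup>m - 1\<close>, \<open>b = (z + x\<^sub>3)\<^sup>m - 1\<close>.
  For a primitive cube root of unity \<open>\<omega>\<close>,
  \<open>G(X, 1 + a, 1 + b, 1) = u X + (a + \<omega> b)(a + \<omega>\<^sup>2 b)\<close> with the unit
  \<open>u = X - a - b - 3\<close>, so \<open>F = u (x\<^sub>1\<^sup>m + \<alpha> \<beta>)\<close> for \<open>\<alpha> = a + \<omega> b\<close>,
  \<open>\<beta> = (a + \<omega>\<^sup>2 b) / u\<close>. Here \<open>a, b\<close> are local coordinates (inverted by principal
  \<open>m\<close>-th roots) and \<open>(a, b)\<close> is recovered from \<open>(\<alpha>, \<beta>)\<close> by a linear system, so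
  \<open>(x\<^sub>1, \<alpha>, \<beta>)\<close> are local coordinates; finally \<open>\<alpha> \<beta> = w\<^sub>2\<^sup>2 + w\<^sub>3\<^sup>2\<close> for
  \<open>w\<^sub>2 = (\<alpha> + \<beta>)/2\<close>, \<open>w\<^sub>3 = (\<alpha> - \<beta>)/2i\<close>.
\<close>

section \<open>Holomorphic functions of several variables\<close>

definition holo_at :: "(complex^'n \<Rightarrow> complex) \<Rightarrow> complex^'n \<Rightarrow> bool" where
  "holo_at f x \<longleftrightarrow> (\<exists>L. (f has_derivative L) (at x) \<and> (\<forall>v. L (\<i> *s v) = \<i> * L v))"

lemma holo_fun_iff: "holo_fun f S \<longleftrightarrow> open S \<and> (\<forall>x\<in>S. holo_at f x)"
  unfolding holo_fun_def holo_at_def by blast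

lemma continuous_at_holo_at: "holo_at f x \<Longrightarrow> continuous (at x) f"
  unfolding holo_at_def using has_derivative_continuous by blast

lemma holo_at_const: "holo_at (\<lambda>t. c) x"
  unfolding holo_at_def by (rule exI[of _ "\<lambda>h. 0"]) auto

lemma holo_at_component: "holo_at (\<lambda>t. t $ k) x"
  unfolding holo_at_def
  by (rule exI[of _ "\<lambda>h. h $ k"]) (auto intro: bounded_linear_imp_has_derivative)

lemma holo_at_add:
  assumes "holo_at f x" and "holo_at g x"
  shows "holo_at (\<lambda>t. f t + g t) x"
proof -
  obtain L M where "(f has_derivative L) (at x)" "(g has_derivative M) (at x)"
    and "\<forall>v. L (\<i> *s v) = \<i> * L v" "\<forall>v. M (\<i> *s v) = \<i> * M v"
    using assms unfolding holo_at_def by blast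
  then show ?thesis
    unfolding holo_at_def
    by (intro exI[of _ "\<lambda>h. L h + M h"]) (auto intro: has_derivative_add simp: algebra_simps)
qed

lemma holo_at_diff:
  assumes "holo_at f x" and "holo_at g x"
  shows "holo_at (\<lambda>t. f t - g t) x"
proof -
  obtain L M where "(f has_derivative L) (at x)" "(g has_derivative M) (at x)"
    and "\<forall>v. L (\<i> *s v) = \<i> * L v" "\<forall>v. M (\<i> *s v) = \<i> * M v"
    using assms unfolding holo_at_def by blast
  then show ?thesis
    unfolding holo_at_def
    by (intro exI[of _ "\<lambda>h. L h - M h"]) (auto intro: has_derivative_diff simp: algebra_simps)
qed

lemma holo_at_mult:
  assumes "holo_at f x" and "holo_at g x"
  shows "holo_at (\<lambda>t. f t * g t) x"
proof -
  obtain L M where "(f has_derivative L) (at x)" "(g has_derivative M) (at x)"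
    and "\<forall>v. L (\<i> *s v) = \<i> * L v" "\<forall>v. M (\<i> *s v) = \<i> * M v"
    using assms unfolding holo_at_def by blast
  then have "((\<lambda>t. f t * g t) has_derivative (\<lambda>h. f x * M h + L h * g x)) (at x)"
    by (intro has_derivative_mult)
  with \<open>\<forall>v. L (\<i> *s v) = \<i> * L v\<close> \<open>\<forall>v. M (\<i> *s v) = \<i> * M v\<close> show ?thesis
    unfolding holo_at_def by (intro exI[of _ "\<lambda>h. f x * M h + L h * g x"]) (simp add: algebra_simps)
qed

lemma holo_at_compose:
  assumes "holo_at f x" and "g field_differentiable (at (f x))"
  shows "holo_at (\<lambda>t. g (f t)) x"
proof -
  obtain L where L: "(f has_derivative L) (at x)" "\<forall>v. L (\<i> *s v) = \<i> * L v"
    using assms(1) unfolding holo_at_def by blast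
  obtain g' where "(g has_derivative (\<lambda>h. g' * h)) (at (f x))"
    using assms(2) unfolding field_differentiable_def has_field_derivative_def by blast
  then have "((\<lambda>t. g (f t)) has_derivative (\<lambda>h. g' * L h)) (at x)"
    by (rule has_derivative_compose[OF L(1)])
  with L(2) show ?thesis
    unfolding holo_at_def by (intro exI[of _ "\<lambda>h. g' * L h"]) (simp add: algebra_simps)
qed

lemma holo_at_power: "holo_at f x \<Longrightarrow> holo_at (\<lambda>t. f t ^ n) x"
  using holo_at_compose[of f x "\<lambda>w. w ^ n"]
    field_differentiable_power[OF field_differentiable_ident] by blast

lemma holo_at_divide:
  assumes "holo_at f x" and "holo_at g x" and "g x \<noteq> 0"
  shows "holo_at (\<lambda>t. f t / g t) x"
proof -
  have "holo_at (\<lambda>t. inverse (g t)) x"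
    using holo_at_compose[of g x inverse] field_differentiable_inverse[OF field_differentiable_ident]
      assms(2,3) by blast
  then show ?thesis
    using holo_at_mult[OF assms(1)] by (simp add: divide_inverse)
qed

lemmas holo_at_intros =
  holo_at_const holo_at_component holo_at_add holo_at_diff holo_at_mult holo_at_power holo_at_divide

lemma open_Collect_holo_at:
  assumes "open S" and "\<And>x. x \<in> S \<Longrightarrow> holo_at f x" and "open T"
  shows "open {x \<in> S. f x \<in> T}"
proof -
  have "continuous_on S f"
    using assms(2) continuous_at_holo_at by (blast intro: continuous_at_imp_continuous_on)
  then have "open (S \<inter> f -` T)"
    using assms by (intro continuous_open_preimage) auto
  moreover have "S \<inter> f -` T = {x \<in> S. f x \<in> T}" by auto
  ultimately show ?thesis by simp
qed

lemma has_derivative_vec_lambda: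
  fixes f :: "'m::finite \<Rightarrow> complex^'n \<Rightarrow> complex"
  assumes "\<And>i. (f i has_derivative L i) (at x)"
  shows "((\<lambda>t. \<chi> i. f i t) has_derivative (\<lambda>h. \<chi> i. L i h)) (at x)"
proof (subst has_derivative_componentwise_within, intro ballI)
  fix b :: "complex^'m"
  assume "b \<in> Basis"
  then obtain i c where "b = axis i c" and "c \<in> Basis"
    by (auto simp: Basis_vec_def)
  then show "((\<lambda>t. (\<chi> i. f i t) \<bullet> b) has_derivative (\<lambda>h. (\<chi> i. L i h) \<bullet> b)) (at x)"
    by (simp add: inner_axis bounded_linear.has_derivative[OF bounded_linear_inner_left assms])
qed

lemma holo_map_vec_lambda:
  assumes "open S" and "\<And>i x. x \<in> S \<Longrightarrow> holo_at (f i) x"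
  shows "holo_map (\<lambda>t. \<chi> i. f i t) S"
  unfolding holo_map_def
proof (intro conjI ballI)
  show "open S" by fact
  fix x assume "x \<in> S"
  then have "\<forall>i. \<exists>L. (f i has_derivative L) (at x) \<and> (\<forall>v. L (\<i> *s v) = \<i> * L v)"
    using assms(2) unfolding holo_at_def by blast
  then obtain L where L: "\<And>i. (f i has_derivative L i) (at x)" "\<And>i v. L i (\<i> *s v) = \<i> * L i v"
    by metis
  show "\<exists>L. ((\<lambda>t. \<chi> i. f i t) has_derivative L) (at x) \<and> (\<forall>v. L (\<i> *s v) = \<i> *s L v)"
    by (intro exI[of _ "\<lambda>h. \<chi> i. L i h"] conjI allI has_derivative_vec_lambda L(1))
      (simp add: L(2) vec_eq_iff)
qed

lemma holo_map_vector_3: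
  assumes "open S" and "\<And>x. x \<in> S \<Longrightarrow> holo_at f1 x"
    and "\<And>x. x \<in> S \<Longrightarrow> holo_at f2 x" and "\<And>x. x \<in> S \<Longrightarrow> holo_at f3 x"
  shows "holo_map (\<lambda>t. vector [f1 t, f2 t, f3 t] :: complex^3) S"
proof -
  let ?f = "\<lambda>i::3. if i = 1 then f1 else if i = 2 then f2 else f3"
  have "holo_map (\<lambda>t. \<chi> i. ?f i t) S"
    using assms by (intro holo_map_vec_lambda) auto
  moreover have "(\<lambda>t. \<chi> i. ?f i t) = (\<lambda>t. vector [f1 t, f2 t, f3 t])"
    by (auto simp: vec_eq_iff forall_3)
  ultimately show ?thesis by simp
qed

lemma holo_map_continuous_on: "holo_map f S \<Longrightarrow> continuous_on S f"
  unfolding holo_map_def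
  by (metis continuous_at_imp_continuous_on has_derivative_continuous)

lemma holo_map_subset: "holo_map f S \<Longrightarrow> open T \<Longrightarrow> T \<subseteq> S \<Longrightarrow> holo_map f T"
  unfolding holo_map_def by blast

text \<open>The two domains need not correspond under \<open>\<phi>\<close>: they are shrunk to
  \<open>U \<inter> \<phi> -` V\<close> and \<open>V \<inter> \<psi> -` U\<close>.\<close>

lemma Aj_germI:
  assumes \<phi>: "holo_map \<phi> U" and \<psi>: "holo_map \<psi> V"
    and "p \<in> U" "\<phi> p = 0" "0 \<in> V"
    and \<psi>\<phi>: "\<And>x. x \<in> U \<Longrightarrow> \<psi> (\<phi> x) = x" and \<phi>\<psi>: "\<And>y. y \<in> V \<Longrightarrow> \<phi> (\<psi> y) = y"
    and u: "holo_fun u U" "\<And>x. x \<in> U \<Longrightarrow> u x \<noteq> 0"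
    and f: "\<And>x. x \<in> U \<Longrightarrow> f x = u x * Aj_form j (\<phi> x)"
  shows "Aj_germ j f p"
proof -
  define U' where "U' = U \<inter> \<phi> -` V"
  define V' where "V' = V \<inter> \<psi> -` U"
  have "open U'" "open V'"
    unfolding U'_def V'_def using \<phi> \<psi>
    by (auto intro!: continuous_open_preimage holo_map_continuous_on simp: holo_map_def)
  then have "holo_map \<phi> U'" "holo_map \<psi> V'" "holo_fun u U'"
    using \<phi> \<psi> u(1) by (auto intro: holo_map_subset simp: U'_def V'_def holo_fun_iff)
  moreover have "p \<in> U'" "0 \<in> V'"
    using assms(3-5) \<psi>\<phi>[OF assms(3)] by (auto simp: U'_def V'_def)
  ultimately show ?thesis
    unfolding Aj_germ_def using assms(4) \<psi>\<phi> \<phi>\<psi> u(2) f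
    by (intro exI[of _ U'] exI[of _ V'] exI[of _ \<phi>] exI[of _ \<psi>] exI[of _ u])
      (auto simp: U'_def V'_def)
qed

section \<open>Principal roots\<close>

definition principal_root :: "nat \<Rightarrow> complex \<Rightarrow> complex" where
  "principal_root m w = exp (Ln w / of_nat m)"

definition root_sector :: "nat \<Rightarrow> complex set" where
  "root_sector m = {w. w \<notin> \<real>\<^sub>\<le>\<^sub>0 \<and> \<bar>Im (Ln w)\<bar> < pi / m}"

lemma principal_root_power: "w \<noteq> 0 \<Longrightarrow> m > 0 \<Longrightarrow> principal_root m w ^ m = w"
  unfolding principal_root_def by (simp add: exp_of_nat_mult[symmetric])

lemma principal_root_of_power:
  assumes "m > 0" and "w \<in> root_sector m"
  shows "principal_root m (w ^ m) = w"
proof -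
  have w: "w \<noteq> 0" using assms(2) by (auto simp: root_sector_def)
  have "\<bar>Im (of_nat m * Ln w)\<bar> < pi"
    using assms by (auto simp: root_sector_def abs_mult field_simps)
  then have "Ln (exp (of_nat m * Ln w)) = of_nat m * Ln w"
    by (intro Ln_exp) auto
  moreover have "w ^ m = exp (of_nat m * Ln w)" by (simp add: exp_of_nat_mult w)
  ultimately show ?thesis using assms(1) w by (simp add: principal_root_def)
qed

lemma open_root_sector: "open (root_sector m)"
proof -
  have "continuous_on (- \<real>\<^sub>\<le>\<^sub>0) (\<lambda>w. Im (Ln w))"
    by (intro continuous_intros) auto
  then have "open ((- \<real>\<^sub>\<le>\<^sub>0) \<inter> (\<lambda>w. Im (Ln w)) -` {- (pi / m)<..<pi / m})"
    by (intro continuous_open_preimage) auto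
  moreover have "(- \<real>\<^sub>\<le>\<^sub>0) \<inter> (\<lambda>w. Im (Ln w)) -` {- (pi / m)<..<pi / m} = root_sector m"
    by (auto simp: root_sector_def abs_less_iff)
  ultimately show ?thesis by simp
qed

lemma one_in_root_sector: "m > 0 \<Longrightarrow> 1 \<in> root_sector m"
  by (simp add: root_sector_def)

lemma holo_at_principal_root:
  assumes "holo_at f x" and "f x \<notin> \<real>\<^sub>\<le>\<^sub>0" and "m > 0"
  shows "holo_at (\<lambda>t. principal_root m (f t)) x"
proof (rule holo_at_compose[OF assms(1)])
  show "principal_root m field_differentiable (at (f x))"
    unfolding principal_root_def field_differentiable_def
    using assms(2,3) by (intro exI) (auto intro!: derivative_eq_intros)
qed

section \<open>The quadric near a tangency point\<close>

definition \<omega> :: complex where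
  "\<omega> = Complex (-1/2) (sqrt 3 / 2)"

lemma omega_root: "\<omega>^2 + \<omega> + 1 = 0"
  by (simp add: \<omega>_def complex_eq_iff power2_eq_square)

lemma omega_cube: "\<omega>^3 = 1"
proof -
  have "\<omega>^3 - 1 = (\<omega> - 1) * (\<omega>^2 + \<omega> + 1)" by algebra
  then show ?thesis using omega_root by simp
qed

lemma omega_square_ne_omega: "\<omega>^2 \<noteq> \<omega>"
proof
  assume "\<omega>^2 = \<omega>"
  then have "Im (\<omega>^2) = Im \<omega>" by simp
  then show False by (simp add: \<omega>_def power2_eq_square)
qed

definition quadric :: "complex \<Rightarrow> complex \<Rightarrow> complex \<Rightarrow> complex \<Rightarrow> complex" where
  "quadric X Y Z W = X^2 + Y^2 + Z^2 + W^2 - X*Y - X*Z - X*W - Y*Z - Y*W - Z*W"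

lemma quadric_near_tangency:
  "quadric X (1 + a) (1 + b) 1 = (X - a - b - 3) * X + (a + \<omega> * b) * (a + \<omega>^2 * b)"
proof -
  have "\<omega>^2 + \<omega> = -1" using omega_root by algebra
  have "(a + \<omega> * b) * (a + \<omega>^2 * b) = a^2 + (\<omega>^2 + \<omega>) * a * b + \<omega>^3 * b^2"
    by algebra
  also have "\<dots> = a^2 - a * b + b^2"
    by (simp add: \<open>\<omega>^2 + \<omega> = -1\<close> omega_cube)
  finally have "(a + \<omega> * b) * (a + \<omega>^2 * b) = a^2 - a * b + b^2" .
  then show ?thesis unfolding quadric_def by (simp add: algebra_simps power2_eq_square)
qed

text \<open>The determinant of the linear system \<open>a + \<omega> b = \<alpha>\<close>,
  \<open>\<beta> (X - a - b - 3) = a + \<omega>\<^sup>2 b\<close> in the unknowns \<open>a, b\<close>.\<close>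

definition system_det :: "complex \<Rightarrow> complex" where
  "system_det \<beta> = \<omega>^2 - \<omega> + \<beta> * (1 - \<omega>)"

lemma solve_for_b:
  assumes "a + \<omega> * b = \<alpha>"
  shows "\<beta> * (X - a - b - 3) = a + \<omega>^2 * b \<longleftrightarrow>
         b * system_det \<beta> = \<beta> * (X - 3) - \<alpha> * (1 + \<beta>)"
  using assms unfolding system_det_def by (auto simp: algebra_simps power2_eq_square)

lemma half_sum_diff_squares: "((\<alpha> + \<beta>) / 2)^2 + ((\<alpha> - \<beta>) / (2 * \<i>))^2 = \<alpha> * \<beta>"
  by (simp add: power2_eq_square field_simps)

section \<open>Local coordinates at a tangency point\<close>

locale tangency_chart =
  fixes m :: nat and y0 z0 :: complex
  assumes m_pos: "m > 0" and y0_root: "y0 ^ m = 1" and z0_root: "z0 ^ m = 1"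
begin

lemma y0_nonzero: "y0 \<noteq> 0"
  using y0_root m_pos by (cases m) auto

lemma z0_nonzero: "z0 \<noteq> 0"
  using z0_root m_pos by (cases m) auto

definition local_eq :: "complex^3 \<Rightarrow> complex" where
  "local_eq t = quadric ((t$1)^m) ((y0 + t$2)^m) ((z0 + t$3)^m) 1"

definition a :: "complex^3 \<Rightarrow> complex" where "a t = (y0 + t$2)^m - 1"
definition b :: "complex^3 \<Rightarrow> complex" where "b t = (z0 + t$3)^m - 1"
definition u :: "complex^3 \<Rightarrow> complex" where "u t = (t$1)^m - a t - b t - 3"
definition \<alpha> :: "complex^3 \<Rightarrow> complex" where "\<alpha> t = a t + \<omega> * b t"
definition \<beta> :: "complex^3 \<Rightarrow> complex" where "\<beta> t = (a t + \<omega>^2 * b t) / u t"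

definition \<phi> :: "complex^3 \<Rightarrow> complex^3" where
  "\<phi> t = vector [t$1, (\<alpha> t + \<beta> t) / 2, (\<alpha> t - \<beta> t) / (2 * \<i>)]"

text \<open>On \<open>dom_\<phi>\<close>, \<open>(a, b)\<close> is recovered from \<open>(\<alpha>, \<beta>)\<close> and the principal roots
  recover \<open>y0 + t$2\<close> and \<open>z0 + t$3\<close> from \<open>a\<close> and \<open>b\<close>.\<close>

definition dom_\<phi> :: "(complex^3) set" where
  "dom_\<phi> = {t. u t \<noteq> 0 \<and> system_det (\<beta> t) \<noteq> 0 \<and>
     (y0 + t$2) / y0 \<in> root_sector m \<and> (z0 + t$3) / z0 \<in> root_sector m}"

definition \<alpha>' :: "complex^3 \<Rightarrow> complex" where "\<alpha>' s = s$2 + \<i> * s$3"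
definition \<beta>' :: "complex^3 \<Rightarrow> complex" where "\<beta>' s = s$2 - \<i> * s$3"

text \<open>\<open>(a' s, b' s)\<close> solves the system of \<open>system_det\<close> for
  \<open>\<alpha> = \<alpha>' s\<close>, \<open>\<beta> = \<beta>' s\<close>, \<open>X = (s$1)\<^sup>m\<close>.\<close>

definition b' :: "complex^3 \<Rightarrow> complex" where
  "b' s = (\<beta>' s * ((s$1)^m - 3) - \<alpha>' s * (1 + \<beta>' s)) / system_det (\<beta>' s)"
definition a' :: "complex^3 \<Rightarrow> complex" where "a' s = \<alpha>' s - \<omega> * b' s"

definition \<psi> :: "complex^3 \<Rightarrow> complex^3" where
  "\<psi> s = vector [s$1, y0 * principal_root m (1 + a' s) - y0, z0 * principal_root m (1 + b' s) - z0]"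

definition dom_\<psi> :: "(complex^3) set" where
  "dom_\<psi> = {s. system_det (\<beta>' s) \<noteq> 0 \<and> 1 + a' s \<notin> \<real>\<^sub>\<le>\<^sub>0 \<and> 1 + b' s \<notin> \<real>\<^sub>\<le>\<^sub>0 \<and>
     (s$1)^m - a' s - b' s - 3 \<noteq> 0}"

lemma local_eq_factor:
  assumes "u t \<noteq> 0"
  shows "local_eq t = u t * Aj_form (m - 1) (\<phi> t)"
proof -
  have u\<beta>: "u t * \<beta> t = a t + \<omega>^2 * b t"
    using assms by (simp add: \<beta>_def)
  have "local_eq t = quadric ((t$1)^m) (1 + a t) (1 + b t) 1"
    by (simp add: local_eq_def a_def b_def)
  also have "\<dots> = u t * (t$1)^m + \<alpha> t * (u t * \<beta> t)"
    unfolding quadric_near_tangency u\<beta> by (simp add: u_def \<alpha>_def)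
  also have "\<dots> = u t * ((t$1)^m + (((\<alpha> t + \<beta> t) / 2)^2 + ((\<alpha> t - \<beta> t) / (2 * \<i>))^2))"
    unfolding half_sum_diff_squares by (simp add: algebra_simps)
  also have "\<dots> = u t * Aj_form (m - 1) (\<phi> t)"
    using m_pos by (simp add: Aj_form_def \<phi>_def add.assoc)
  finally show ?thesis .
qed

lemma \<psi>_\<phi>:
  assumes "t \<in> dom_\<phi>"
  shows "\<psi> (\<phi> t) = t"
proof -
  have u: "u t \<noteq> 0" and det: "system_det (\<beta> t) \<noteq> 0"
    and y: "(y0 + t$2) / y0 \<in> root_sector m" and z: "(z0 + t$3) / z0 \<in> root_sector m"
    using assms by (auto simp: dom_\<phi>_def)
  have \<alpha>\<beta>: "\<alpha>' (\<phi> t) = \<alpha> t" "\<beta>' (\<phi> t) = \<beta> t" "\<phi> t $ 1 = t $ 1"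
    by (simp_all add: \<alpha>'_def \<beta>'_def \<phi>_def field_simps)
  have "\<beta> t * ((t$1)^m - a t - b t - 3) = a t + \<omega>^2 * b t"
    using u by (simp add: \<beta>_def u_def)
  then have "b t * system_det (\<beta> t) = \<beta> t * ((t$1)^m - 3) - \<alpha> t * (1 + \<beta> t)"
    using solve_for_b[OF \<alpha>_def[symmetric]] by blast
  then have b: "b' (\<phi> t) = b t"
    using det by (simp add: b'_def \<alpha>\<beta> field_simps)
  have a: "a' (\<phi> t) = a t"
    by (simp add: a'_def b \<alpha>\<beta> \<alpha>_def)
  have "1 + a t = ((y0 + t$2) / y0)^m" and "1 + b t = ((z0 + t$3) / z0)^m"
    using y0_root z0_root by (simp_all add: a_def b_def power_divide)
  then have "y0 * principal_root m (1 + a t) - y0 = t$2" "z0 * principal_root m (1 + b t) - z0 = t$3"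
    using principal_root_of_power[OF m_pos y] principal_root_of_power[OF m_pos z]
      y0_nonzero z0_nonzero by simp_all
  then show ?thesis
    by (simp add: \<psi>_def a b \<alpha>\<beta> vec_eq_iff forall_3)
qed

lemma \<phi>_\<psi>:
  assumes "s \<in> dom_\<psi>"
  shows "\<phi> (\<psi> s) = s"
proof -
  have det: "system_det (\<beta>' s) \<noteq> 0" and nz: "1 + a' s \<noteq> 0" "1 + b' s \<noteq> 0"
    and u: "(s$1)^m - a' s - b' s - 3 \<noteq> 0"
    using assms by (auto simp: dom_\<psi>_def)
  have \<psi>1: "\<psi> s $ 1 = s $ 1"
    by (simp add: \<psi>_def)
  have a: "a (\<psi> s) = a' s" and b: "b (\<psi> s) = b' s"
    using nz principal_root_power m_pos y0_root z0_root
    by (simp_all add: a_def b_def \<psi>_def power_mult_distrib)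
  have "b' s * system_det (\<beta>' s) = \<beta>' s * ((s$1)^m - 3) - \<alpha>' s * (1 + \<beta>' s)"
    using det by (simp add: b'_def)
  then have "\<beta>' s * ((s$1)^m - a' s - b' s - 3) = a' s + \<omega>^2 * b' s"
    using solve_for_b[of "a' s" "b' s" "\<alpha>' s"] by (simp add: a'_def)
  moreover have "\<beta> (\<psi> s) = (a' s + \<omega>^2 * b' s) / ((s$1)^m - a' s - b' s - 3)"
    by (simp add: \<beta>_def u_def a b \<psi>1)
  ultimately have "\<beta> (\<psi> s) = \<beta>' s"
    using u by (metis nonzero_divide_eq_eq)
  moreover have "\<alpha> (\<psi> s) = \<alpha>' s"
    by (simp add: \<alpha>_def a b a'_def)
  ultimately show ?thesis
    by (simp add: \<phi>_def \<psi>_def \<alpha>'_def \<beta>'_def vec_eq_iff forall_3 field_simps)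
qed

lemma zero_in_dom_\<phi>: "0 \<in> dom_\<phi>" and \<phi>_zero: "\<phi> 0 = 0"
proof -
  have ab: "a 0 = 0" "b 0 = 0"
    using y0_root z0_root by (simp_all add: a_def b_def)
  then have "u 0 = -3" "\<beta> 0 = 0"
    using m_pos by (simp_all add: u_def \<beta>_def)
  then show "0 \<in> dom_\<phi>"
    using y0_nonzero z0_nonzero one_in_root_sector[OF m_pos] omega_square_ne_omega
    by (simp add: dom_\<phi>_def system_det_def)
  show "\<phi> 0 = 0"
    using ab \<open>\<beta> 0 = 0\<close> by (simp add: \<phi>_def \<alpha>_def vec_eq_iff forall_3)
qed

lemma zero_in_dom_\<psi>: "0 \<in> dom_\<psi>"
proof -
  have "\<alpha>' 0 = 0" "\<beta>' 0 = 0" by (simp_all add: \<alpha>'_def \<beta>'_def)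
  then have "b' 0 = 0" "a' 0 = 0" by (simp_all add: b'_def a'_def)
  then show ?thesis
    using \<open>\<beta>' 0 = 0\<close> omega_square_ne_omega m_pos by (simp add: dom_\<psi>_def system_det_def zero_power)
qed

lemma holo_at_a: "holo_at a t"
  unfolding a_def[abs_def] by (intro holo_at_intros)

lemma holo_at_b: "holo_at b t"
  unfolding b_def[abs_def] by (intro holo_at_intros)

lemma holo_at_u: "holo_at u t"
  unfolding u_def[abs_def] by (intro holo_at_intros holo_at_a holo_at_b)

lemma holo_at_\<alpha>: "holo_at \<alpha> t"
  unfolding \<alpha>_def[abs_def] by (intro holo_at_intros holo_at_a holo_at_b)

lemma holo_at_\<beta>: "u t \<noteq> 0 \<Longrightarrow> holo_at \<beta> t"
  unfolding \<beta>_def[abs_def] by (intro holo_at_intros holo_at_a holo_at_b holo_at_u)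

lemma holo_at_b': "system_det (\<beta>' s) \<noteq> 0 \<Longrightarrow> holo_at b' s"
  unfolding b'_def[abs_def] \<alpha>'_def[abs_def] \<beta>'_def[abs_def] system_det_def
  by (intro holo_at_intros)

lemma holo_at_a': "system_det (\<beta>' s) \<noteq> 0 \<Longrightarrow> holo_at a' s"
  unfolding a'_def[abs_def] \<alpha>'_def[abs_def]
  by (intro holo_at_intros holo_at_b')

lemma open_dom_\<phi>: "open dom_\<phi>"
proof -
  let ?U1 = "{t \<in> UNIV. u t \<in> - {0}}"
  let ?U2 = "{t \<in> ?U1. system_det (\<beta> t) \<in> - {0}}"
  let ?U3 = "{t \<in> ?U2. (y0 + t$2) / y0 \<in> root_sector m}"
  let ?U4 = "{t \<in> ?U3. (z0 + t$3) / z0 \<in> root_sector m}"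
  have "open ?U1"
    by (intro open_Collect_holo_at holo_at_u) auto
  then have "open ?U2"
    unfolding system_det_def
    by (rule open_Collect_holo_at) (auto intro!: holo_at_intros holo_at_\<beta>)
  then have "open ?U3"
    by (rule open_Collect_holo_at) (auto intro!: holo_at_intros open_root_sector y0_nonzero)
  then have "open ?U4"
    by (rule open_Collect_holo_at) (auto intro!: holo_at_intros open_root_sector z0_nonzero)
  moreover have "?U4 = dom_\<phi>" by (auto simp: dom_\<phi>_def)
  ultimately show ?thesis by simp
qed

lemma open_dom_\<psi>: "open dom_\<psi>"
proof -
  let ?V1 = "{s \<in> UNIV. system_det (\<beta>' s) \<in> - {0}}"
  let ?V2 = "{s \<in> ?V1. 1 + a' s \<in> - \<real>\<^sub>\<le>\<^sub>0}"
  let ?V3 = "{s \<in> ?V2. 1 + b' s \<in> - \<real>\<^sub>\<le>\<^sub>0}"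
  let ?V4 = "{s \<in> ?V3. (s$1)^m - a' s - b' s - 3 \<in> - {0}}"
  have "open ?V1"
    unfolding system_det_def \<beta>'_def by (intro open_Collect_holo_at holo_at_intros) auto
  then have "open ?V2"
    by (rule open_Collect_holo_at) (auto intro!: holo_at_intros holo_at_a')
  then have "open ?V3"
    by (rule open_Collect_holo_at) (auto intro!: holo_at_intros holo_at_b')
  then have "open ?V4"
    by (rule open_Collect_holo_at) (auto intro!: holo_at_intros holo_at_a' holo_at_b')
  moreover have "?V4 = dom_\<psi>" by (auto simp: dom_\<psi>_def)
  ultimately show ?thesis by simp
qed

lemma holo_map_\<phi>: "holo_map \<phi> dom_\<phi>"
  unfolding \<phi>_def[abs_def]
proof (rule holo_map_vector_3[OF open_dom_\<phi>])
  fix t assume "t \<in> dom_\<phi>"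
  then have "u t \<noteq> 0" by (simp add: dom_\<phi>_def)
  then show "holo_at (\<lambda>t. t $ 1) t" "holo_at (\<lambda>t. (\<alpha> t + \<beta> t) / 2) t"
    "holo_at (\<lambda>t. (\<alpha> t - \<beta> t) / (2 * \<i>)) t"
    by (intro holo_at_intros holo_at_\<alpha> holo_at_\<beta>; simp)+
qed

lemma holo_map_\<psi>: "holo_map \<psi> dom_\<psi>"
  unfolding \<psi>_def[abs_def]
proof (rule holo_map_vector_3[OF open_dom_\<psi>])
  fix s assume "s \<in> dom_\<psi>"
  then have "system_det (\<beta>' s) \<noteq> 0" "1 + a' s \<notin> \<real>\<^sub>\<le>\<^sub>0" "1 + b' s \<notin> \<real>\<^sub>\<le>\<^sub>0"
    by (simp_all add: dom_\<psi>_def)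
  then show "holo_at (\<lambda>s. s $ 1) s"
    "holo_at (\<lambda>s. y0 * principal_root m (1 + a' s) - y0) s"
    "holo_at (\<lambda>s. z0 * principal_root m (1 + b' s) - z0) s"
    by (auto intro!: holo_at_intros holo_at_principal_root holo_at_a' holo_at_b' m_pos)
qed

lemma Aj_germ_local_eq: "Aj_germ (m - 1) local_eq 0"
proof (rule Aj_germI[OF holo_map_\<phi> holo_map_\<psi> zero_in_dom_\<phi> \<phi>_zero zero_in_dom_\<psi> \<psi>_\<phi> \<phi>_\<psi>])
  show "holo_fun u dom_\<phi>"
    unfolding holo_fun_iff using open_dom_\<phi> holo_at_u by blast
  show "u t \<noteq> 0" "local_eq t = u t * Aj_form (m - 1) (\<phi> t)" if "t \<in> dom_\<phi>" for t
    using that local_eq_factor by (simp_all add: dom_\<phi>_def)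
qed

end

section \<open>The surface\<close>

definition surface_coeffs :: "nat \<Rightarrow> nat \<Rightarrow> nat \<Rightarrow> nat \<Rightarrow> nat \<Rightarrow> complex" where
  "surface_coeffs m a b e g =
     (if (a, b, e, g) \<in> {(2*m, 0, 0, 0), (0, 2*m, 0, 0), (0, 0, 2*m, 0), (0, 0, 0, 2*m)} then 1
      else if (a, b, e, g) \<in> {(m, m, 0, 0), (m, 0, m, 0), (m, 0, 0, m), (0, m, m, 0), (0, m, 0, m),
                             (0, 0, m, m)} then -1
      else 0)"

lemma hpoly_eval_eq_sum_support:
  assumes "T \<subseteq> {(a, b, e, g). a + b + e + g = d}"
    and "\<And>a b e g. a + b + e + g = d \<Longrightarrow> (a, b, e, g) \<notin> T \<Longrightarrow> c a b e g = 0"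
  shows "hpoly_eval d c x =
    (\<Sum>(a, b, e, g)\<in>T. c a b e g * (x$1)^a * (x$2)^b * (x$3)^e * (x$4)^g)"
proof -
  have "finite {(a, b, e, g). a + b + e + g = d}"
    by (rule finite_subset[of _ "{..d} \<times> {..d} \<times> {..d} \<times> {..d}"]) auto
  then show ?thesis
    unfolding hpoly_eval_def using assms by (intro sum.mono_neutral_right) auto
qed

lemma hpoly_eval_surface_coeffs:
  assumes "m > 0"
  shows "hpoly_eval (2*m) (surface_coeffs m) x = quadric ((x$1)^m) ((x$2)^m) ((x$3)^m) ((x$4)^m)"
proof -
  let ?T = "{(2*m, 0, 0, 0), (0, 2*m, 0, 0), (0, 0, 2*m, 0), (0, 0, 0, 2*m),
             (m, m, 0, 0), (m, 0, m, 0), (m, 0, 0, m), (0, m, m, 0), (0, m, 0, m), (0, 0, m, m)}"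
  have "hpoly_eval (2*m) (surface_coeffs m) x =
      (\<Sum>(a, b, e, g)\<in>?T. surface_coeffs m a b e g * (x$1)^a * (x$2)^b * (x$3)^e * (x$4)^g)"
    by (rule hpoly_eval_eq_sum_support) (auto simp: surface_coeffs_def)
  also have "\<dots> = quadric ((x$1)^m) ((x$2)^m) ((x$3)^m) ((x$4)^m)"
    using assms
    by (simp add: surface_coeffs_def quadric_def power_mult power2_eq_square power_mult_distrib
        algebra_simps)
  finally show ?thesis .
qed

lemma hpoly_nonzero_surface_coeffs: "hpoly_nonzero (2*m) (surface_coeffs m)"
  unfolding hpoly_nonzero_def
  by (intro exI[of _ "2*m"] exI[of _ 0]) (simp add: surface_coeffs_def)

lemma vector_4 [simp]:
  "(vector [x1, x2, x3, x4] :: ('a::zero)^4) $ 1 = x1"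
  "(vector [x1, x2, x3, x4] :: ('a::zero)^4) $ 2 = x2"
  "(vector [x1, x2, x3, x4] :: ('a::zero)^4) $ 3 = x3"
  "(vector [x1, x2, x3, x4] :: ('a::zero)^4) $ 4 = x4"
  unfolding vector_def by simp_all

lemma Aj_point_permute_coords:
  fixes \<sigma> :: "4 \<Rightarrow> 4"
  assumes "surj \<sigma>" and F: "\<And>x. hpoly_eval d c (\<chi> i. x $ \<sigma> i) = hpoly_eval d c x"
    and "Aj_point j d c v"
  shows "Aj_point j d c (\<chi> i. v $ \<sigma> i)"
proof -
  obtain A where inj: "\<forall>x a. A *v x + a *s v = 0 \<longrightarrow> x = 0 \<and> a = 0"
    and germ: "Aj_germ j (\<lambda>x. hpoly_eval d c (v + A *v x)) 0"
    using assms(3) unfolding Aj_point_def by blast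
  define A' :: "complex^3^4" where "A' = (\<chi> i. A $ \<sigma> i)"
  have A'_mult: "A' *v x = (\<chi> i. (A *v x) $ \<sigma> i)" for x
    by (simp add: A'_def matrix_vector_mult_def)
  have "x = 0 \<and> a = 0" if "A' *v x + a *s (\<chi> i. v $ \<sigma> i) = 0" for x a
  proof -
    have "(A *v x + a *s v) $ \<sigma> i = 0" for i
      using that by (simp add: A'_mult vec_eq_iff)
    then have "A *v x + a *s v = 0"
      using assms(1) by (metis surjD vec_eq_iff zero_index)
    with inj show ?thesis by blast
  qed
  moreover have "(\<lambda>x. hpoly_eval d c ((\<chi> i. v $ \<sigma> i) + A' *v x)) = (\<lambda>x. hpoly_eval d c (v + A *v x))"
    using F[of "v + A *v _"] by (simp add: A'_mult vec_lambda_unique plus_vec_def)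
  ultimately show ?thesis
    using germ unfolding Aj_point_def by (intro exI[of _ A']) auto
qed

lemma hpoly_eval_surface_coeffs_transpose:
  assumes "m > 0"
  shows "hpoly_eval (2*m) (surface_coeffs m) (\<chi> i. x $ Transposition.transpose 1 k i) =
         hpoly_eval (2*m) (surface_coeffs m) x"
  unfolding hpoly_eval_surface_coeffs[OF assms]
  using exhaust_4[of k] by (elim disjE) (simp_all add: quadric_def algebra_simps)

lemma Aj_point_base:
  assumes "m > 0" and "y ^ m = 1" and "z ^ m = 1"
  shows "Aj_point (m - 1) (2*m) (surface_coeffs m) (vector [0, y, z, 1])"
proof -
  interpret tangency_chart m y z
    using assms by unfold_locales
  define A :: "complex^3^4" where "A = vector [axis 1 1, axis 2 1, axis 3 1, 0]"
  have A_mult: "A *v x = vector [x$1, x$2, x$3, 0]" for x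
    by (simp add: A_def matrix_vector_mult_def vec_eq_iff forall_4 sum_3 axis_def)
  have "x = 0 \<and> a = 0" if "A *v x + a *s vector [0, y, z, 1] = 0" for x a
    using that by (auto simp: A_mult vec_eq_iff forall_3 forall_4)
  moreover have "(\<lambda>x. hpoly_eval (2*m) (surface_coeffs m) (vector [0, y, z, 1] + A *v x)) = local_eq"
    using assms(1) by (simp add: fun_eq_iff A_mult hpoly_eval_surface_coeffs local_eq_def)
  ultimately show ?thesis
    unfolding Aj_point_def using Aj_germ_local_eq by (intro exI[of _ A]) auto
qed

definition tangency_point :: "4 \<Rightarrow> complex \<Rightarrow> complex \<Rightarrow> complex^4" where
  "tangency_point k y z = (\<chi> i. vector [0, y, z, 1] $ Transposition.transpose 1 k i)"

lemma tangency_point_explicit: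
  "tangency_point 1 y z = vector [0, y, z, 1]"
  "tangency_point 2 y z = vector [y, 0, z, 1]"
  "tangency_point 3 y z = vector [z, y, 0, 1]"
  "tangency_point 4 y z = vector [1, y, z, 0]"
  by (auto simp: tangency_point_def vec_eq_iff forall_4)

lemma Aj_point_tangency_point:
  assumes "m > 0" and "y ^ m = 1" and "z ^ m = 1"
  shows "Aj_point (m - 1) (2*m) (surface_coeffs m) (tangency_point k y z)"
  unfolding tangency_point_def
  using assms
  by (intro Aj_point_permute_coords Aj_point_base hpoly_eval_surface_coeffs_transpose
      surj_transpose)

lemma tangency_point_on_surface:
  assumes "m > 0" and "y ^ m = 1" and "z ^ m = 1"
  shows "hpoly_eval (2*m) (surface_coeffs m) (tangency_point k y z) = 0"
  unfolding tangency_point_def hpoly_eval_surface_coeffs_transpose[OF assms(1)]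
  using assms by (simp add: hpoly_eval_surface_coeffs quadric_def zero_power)

lemma tangency_point_nonzero: "tangency_point k y z \<noteq> 0"
  using exhaust_4[of k] by (auto simp: tangency_point_explicit vec_eq_iff forall_4)

lemma tangency_point_eq_scaled:
  assumes "tangency_point k' y' z' = c *s tangency_point k y z"
    and "y \<noteq> 0" "z \<noteq> 0" "y' \<noteq> 0" "z' \<noteq> 0"
  shows "(k', y', z') = (k, y, z)"
  using assms exhaust_4[of k] exhaust_4[of k']
  by (auto simp: tangency_point_explicit vec_eq_iff forall_4)

theorem mainTheorem8:
  fixes j :: nat
  shows "\<exists>c. hpoly_nonzero (2 * (j + 1)) c \<and>
           (\<exists>P :: (complex^4) set. finite P \<and> card P = 4 * (j + 1)^2 \<and>
              (\<forall>v\<in>P. v \<noteq> 0 \<and> hpoly_eval (2 * (j + 1)) c v = 0 \<and>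
                       Aj_point j (2 * (j + 1)) c v) \<and>
              (\<forall>v\<in>P. \<forall>w\<in>P. v \<noteq> w \<longrightarrow> (\<forall>a::complex. w \<noteq> a *s v)))"
proof -
  define m where "m = j + 1"
  define R where "R = {z::complex. z ^ m = 1}"
  define P where "P = (\<lambda>(k, y, z). tangency_point k y z) ` (UNIV \<times> R \<times> R)"
  have m: "m > 0" and mj: "m - 1 = j" by (simp_all add: m_def)
  have R: "finite R" "card R = m" "\<And>z. z \<in> R \<Longrightarrow> z \<noteq> 0"
    using m by (auto simp: R_def finite_roots_unity card_roots_unity_eq power_0_left)
  have "inj_on (\<lambda>(k, y, z). tangency_point k y z) (UNIV \<times> R \<times> R)"
    using R(3) by (intro inj_onI) (auto dest: tangency_point_eq_scaled[where c = 1, simplified])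
  then have card: "card P = 4 * m^2"
    unfolding P_def using R(1,2) by (simp add: card_image card_cartesian_product power2_eq_square)
  have points: "\<forall>v\<in>P. v \<noteq> 0 \<and> hpoly_eval (2*m) (surface_coeffs m) v = 0 \<and>
      Aj_point j (2*m) (surface_coeffs m) v"
    using m tangency_point_nonzero tangency_point_on_surface
      Aj_point_tangency_point[where m = m, unfolded mj]
    by (auto simp: P_def R_def)
  have distinct: "\<forall>v\<in>P. \<forall>w\<in>P. v \<noteq> w \<longrightarrow> (\<forall>a. w \<noteq> a *s v)"
    unfolding P_def using R(3) by (fastforce dest: tangency_point_eq_scaled)
  show ?thesis
    unfolding m_def[symmetric] using R(1)
    by (intro exI[of _ "surface_coeffs m"] exI[of _ P] conjI hpoly_nonzero_surface_coeffs card
        points distinct) (simp add: P_def)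
qed

end
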